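(* Let $k_0<0$, $0<L\leq\pi$, let $D\subset(0,L)$ be a set of full Lebesgue measure, and let $w:D\to\mathbb{R}$ satisfy: (i) $w$ is strictly decreasing on $D$: for $t_1,t_2\in D$ with $t_1<t_2$, $w(t_1)>w(t_2)$; (ii) for every $t_0\in D$, $\limsup_{D\ni t\to t_0^+}\frac{w(t)-w(t_0)}{t-t_0}\leq-1-(w(t_0))^2$; (iii) $w(t)\leq\frac{\sqrt{-k_0}\cosh(\sqrt{-k_0}t)}{\sinh(\sqrt{-k_0}t)}$ for $t\in D$ close to $0$. Then $w(t)\leq\cot t$ for every $t\in D$. *)

theory Defs
  imports "HOL-Analysis.Analysis"
begin

end

theory Submission
  imports Defs
begin

text \<open>
  The function \<open>A = arctan \<circ> w\<close> turns the Riccati inequality \<open>w' \<le> -1 - w\<^sup>2\<close> into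
  \<open>A' \<le> -1\<close>, understood as a bound on the upper right Dini derivative at the points of \<open>D\<close>.
  Since \<open>A\<close> is decreasing, the missing null set cannot raise \<open>A\<close>: covering it by an open set
  of small measure and running a continuity induction gives \<open>A s - A t \<ge> t - s\<close> for
  \<open>s < t\<close> in \<open>D\<close>. As \<open>A < pi/2\<close> and \<open>D\<close> has points arbitrarily close to \<open>0\<close>, this yields
  \<open>A t \<le> pi/2 - t\<close>, that is \<open>w t \<le> cot t\<close>.
\<close>

lemma full_measure_dense:
  fixes D :: "real set" and a b x y :: real
  assumes "{a<..<b} - D \<in> null_sets lebesgue" "a \<le> x" "x < y" "y \<le> b"
  shows "\<exists>z\<in>D. x < z \<and> z < y"
proof (rule ccontr)
  assume "\<not> ?thesis"
  then have "{x<..<y} \<subseteq> {a<..<b} - D" using assms by auto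
  then have "negligible (box x y)"
    using assms(1) negligible_iff_null_sets negligible_subset by (metis box_real(1))
  then show False using negligible_interval(2)[of x y] \<open>x < y\<close> by (simp add: box_real)
qed

lemma le_of_full_measure_left:
  fixes D :: "real set" and \<phi> :: "real \<Rightarrow> real"
  assumes "{a<..<b} - D \<in> null_sets lebesgue" "a \<le> u" "u < x" "x \<le> b"
    and "isCont \<phi> x"
    and bound: "\<And>z. z \<in> D \<Longrightarrow> u < z \<Longrightarrow> z < x \<Longrightarrow> \<phi> z \<le> C"
  shows "\<phi> x \<le> C"
proof (rule ccontr)
  assume "\<not> \<phi> x \<le> C"
  then have "eventually (\<lambda>z. C < \<phi> z) (at x)"
    using \<open>isCont \<phi> x\<close> by (simp add: isCont_def order_tendstoD(1))
  then obtain d where "d > 0" and d: "\<And>z. z \<noteq> x \<Longrightarrow> dist z x < d \<Longrightarrow> C < \<phi> z"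
    unfolding eventually_at by auto
  have "a \<le> max u (x - d)" "max u (x - d) < x" using assms(2,3) \<open>d > 0\<close> by auto
  then obtain z where "z \<in> D" "max u (x - d) < z" "z < x"
    using full_measure_dense[OF assms(1)] assms(4) by blast
  then show False using bound[of z] d[of z] by (auto simp: dist_real_def)
qed

lemma real_induction:
  fixes a b :: real and Q :: "real \<Rightarrow> bool"
  assumes "a \<le> b"
    and left: "\<And>x. a \<le> x \<Longrightarrow> x \<le> b \<Longrightarrow> (\<And>y. a \<le> y \<Longrightarrow> y < x \<Longrightarrow> Q y) \<Longrightarrow> Q x"
    and right: "\<And>x. a \<le> x \<Longrightarrow> x < b \<Longrightarrow> (\<And>y. a \<le> y \<Longrightarrow> y \<le> x \<Longrightarrow> Q y) \<Longrightarrow>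
                  \<exists>d>0. \<forall>y. x < y \<and> y < x + d \<longrightarrow> Q y"
  shows "Q b"
proof -
  define K where "K = {x. a \<le> x \<and> x \<le> b \<and> (\<forall>y. a \<le> y \<and> y \<le> x \<longrightarrow> Q y)}"
  define c where "c = Sup K"
  have "a \<in> K" using left[of a] \<open>a \<le> b\<close> by (auto simp: K_def)
  have bdd: "bdd_above K" unfolding K_def by (intro bdd_aboveI[of _ b]) auto
  have "a \<le> c" unfolding c_def using \<open>a \<in> K\<close> bdd by (rule cSup_upper)
  have "c \<le> b" unfolding c_def using \<open>a \<in> K\<close> by (intro cSup_least) (auto simp: K_def)
  have below: "Q y" if "a \<le> y" "y < c" for y
  proof -
    obtain x where "x \<in> K" "y < x" using less_cSup_iff[of K y] \<open>a \<in> K\<close> bdd \<open>y < c\<close> c_def by auto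
    then show ?thesis using that by (auto simp: K_def)
  qed
  have upto_c: "Q y" if "a \<le> y" "y \<le> c" for y
    using that below left[of c] \<open>a \<le> c\<close> \<open>c \<le> b\<close> by (cases "y < c") auto
  have "c = b"
  proof (rule ccontr)
    assume "c \<noteq> b"
    with \<open>c \<le> b\<close> obtain d where "d > 0" and d: "\<forall>y. c < y \<and> y < c + d \<longrightarrow> Q y"
      using right[of c] \<open>a \<le> c\<close> upto_c by force
    define x where "x = c + min (d/2) (b - c)"
    have "x \<in> K" using d upto_c \<open>d > 0\<close> \<open>c \<le> b\<close> \<open>c \<noteq> b\<close> \<open>a \<le> c\<close>
      by (force simp: K_def x_def)
    then have "x \<le> c" unfolding c_def using bdd by (rule cSup_upper)
    then show False using \<open>d > 0\<close> \<open>c \<le> b\<close> \<open>c \<noteq> b\<close> by (simp add: x_def)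
  qed
  then show ?thesis using upto_c \<open>a \<le> c\<close> by simp
qed

lemma null_set_open_superset_small:
  fixes N :: "real set" and e :: real
  assumes "N \<in> null_sets lebesgue" "e > 0"
  obtains T where "open T" "N \<subseteq> T" "\<And>a b. measure lebesgue (T \<inter> {a..b}) < e"
proof -
  obtain T where T: "open T" "N \<subseteq> T" "T - N \<in> lmeasurable" "emeasure lebesgue (T - N) < ennreal e"
    using sets_lebesgue_outer_open[of N e] assms by auto
  have N: "N \<in> fmeasurable lebesgue" using assms(1) by (auto simp: fmeasurable_def null_sets_def)
  have "measure lebesgue (T \<inter> {a..b}) < e" for a b
  proof -
    have "(T - N) \<union> N = T" using T(2) by auto
    then have "T \<in> lmeasurable" using fmeasurable.Un[OF T(3) N] by simp
    then have "measure lebesgue (T \<inter> {a..b}) \<le> measure lebesgue ((T - N) \<union> N)"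
      using \<open>(T - N) \<union> N = T\<close> by (intro measure_mono_fmeasurable) auto
    also have "\<dots> = measure lebesgue (T - N)"
      using T(3) assms(1) by (intro measure_Un_null_set) auto
    also have "\<dots> < e"
      using T(4) emeasure_eq_measure2[OF T(3)] by (metis ennreal_less_iff measure_nonneg)
    finally show ?thesis .
  qed
  then show ?thesis using that T(1,2) by blast
qed

lemma measure_Int_atLeastAtMost_mono:
  fixes T :: "real set"
  assumes "T \<in> sets lebesgue" "x \<le> y"
  shows "measure lebesgue (T \<inter> {s..x}) \<le> measure lebesgue (T \<inter> {s..y})"
  using assms by (intro measure_mono_fmeasurable bounded_set_imp_lmeasurable)
    (auto intro: bounded_Int)

lemma measure_Int_atLeastAtMost_extend:
  fixes T :: "real set"
  assumes "T \<in> sets lebesgue" "s \<le> x" "x \<le> y" "{x..y} \<subseteq> T"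
  shows "measure lebesgue (T \<inter> {s..y}) = measure lebesgue (T \<inter> {s..x}) + (y - x)"
proof -
  have split: "T \<inter> {s..y} = (T \<inter> {s..x}) \<union> {x<..y}" using assms(2-4) by auto
  have "T \<inter> {s..x} \<in> lmeasurable" "{x<..y} \<in> lmeasurable"
    using assms(1) by (auto intro!: bounded_set_imp_lmeasurable bounded_Int)
  then have "measure lebesgue (T \<inter> {s..y}) = measure lebesgue (T \<inter> {s..x}) + measure lebesgue {x<..y}"
    unfolding split by (intro measure_Union) (auto simp: fmeasurable_def)
  then show ?thesis using assms(3) by simp
qed

lemma decreasing_slope_compensated:
  fixes D :: "real set" and f h :: "real \<Rightarrow> real" and a b e s t :: real
  assumes D_sub: "D \<subseteq> {a<..<b}" and D_full: "{a<..<b} - D \<in> null_sets lebesgue"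
    and decr: "\<And>x y. x \<in> D \<Longrightarrow> y \<in> D \<Longrightarrow> x \<le> y \<Longrightarrow> f y \<le> f x"
    and slope: "\<And>x. x \<in> D \<Longrightarrow>
                  \<exists>\<eta>>0. \<forall>y\<in>D. x < y \<and> y < x + \<eta> \<longrightarrow> (1 - e) * (y - x) \<le> f x - f y"
    and h_mono: "\<And>x y. x \<le> y \<Longrightarrow> h x \<le> h y" and "0 \<le> h s"
    and h_off: "\<And>x. x \<in> {a<..<b} - D \<Longrightarrow> s \<le> x \<Longrightarrow>
                  \<exists>r>0. \<forall>y. x < y \<and> y < x + r \<longrightarrow> h x + (y - x) \<le> h y"
    and "s \<in> D" "t \<in> D" "s < t" "0 \<le> e"
  shows "(1 - e) * (t - s) \<le> f s - f t + h t"
proof -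
  have "a < s" "t < b" using \<open>s \<in> D\<close> \<open>t \<in> D\<close> D_sub by auto
  define Q where "Q y \<longleftrightarrow> (y \<in> D \<longrightarrow> (1 - e) * (y - s) \<le> f s - f y + h y)" for y
  have left_step: "Q x" if "s \<le> x" "x \<le> t" and IH: "\<And>y. s \<le> y \<Longrightarrow> y < x \<Longrightarrow> Q y" for x
    unfolding Q_def
  proof
    assume "x \<in> D"
    show "(1 - e) * (x - s) \<le> f s - f x + h x"
    proof (cases "s = x")
      case True
      then show ?thesis using \<open>0 \<le> h s\<close> by simp
    next
      case False
      have bound: "(1 - e) * (z - s) \<le> f s - f x + h x" if "z \<in> D" "s < z" "z < x" for z
      proof -
        have "(1 - e) * (z - s) \<le> f s - f z + h z" using IH[of z] that by (simp add: Q_def)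
        moreover have "f x \<le> f z" using decr[of z x] that \<open>x \<in> D\<close> by simp
        moreover have "h z \<le> h x" using h_mono that(3) by simp
        ultimately show ?thesis by linarith
      qed
      show ?thesis
        by (rule le_of_full_measure_left[OF D_full, where u = s and \<phi> = "\<lambda>z. (1 - e) * (z - s)"])
          (use bound \<open>a < s\<close> \<open>s \<le> x\<close> False \<open>x \<le> t\<close> \<open>t < b\<close> in \<open>auto intro: continuous_intros\<close>)
    qed
  qed
  have right_step: "\<exists>d>0. \<forall>y. x < y \<and> y < x + d \<longrightarrow> Q y"
    if "s \<le> x" "x < t" and IH: "\<And>y. s \<le> y \<Longrightarrow> y \<le> x \<Longrightarrow> Q y" for x
  proof (cases "x \<in> D")
    case True
    then obtain \<eta> where "\<eta> > 0"
      and \<eta>: "\<forall>y\<in>D. x < y \<and> y < x + \<eta> \<longrightarrow> (1 - e) * (y - x) \<le> f x - f y"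
      using slope by blast
    have "Q y" if "x < y" "y < x + \<eta>" for y
      unfolding Q_def
    proof
      assume "y \<in> D"
      then have "(1 - e) * (y - x) \<le> f x - f y" using \<eta> that by blast
      moreover have "(1 - e) * (x - s) \<le> f s - f x + h x"
        using IH[of x] True \<open>s \<le> x\<close> by (simp add: Q_def)
      moreover have "h x \<le> h y" using h_mono that(1) by simp
      ultimately show "(1 - e) * (y - s) \<le> f s - f y + h y" by (simp add: algebra_simps)
    qed
    then show ?thesis using \<open>\<eta> > 0\<close> by blast
  next
    case False
    then have "s < x" using \<open>s \<le> x\<close> \<open>s \<in> D\<close> by (cases "s = x") auto
    then obtain r where "r > 0" and r: "\<forall>y. x < y \<and> y < x + r \<longrightarrow> h x + (y - x) \<le> h y"
      using h_off[of x] False \<open>a < s\<close> \<open>s \<le> x\<close> \<open>x < t\<close> \<open>t < b\<close> by auto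
    have "Q y" if "x < y" "y < x + r" for y
      unfolding Q_def
    proof
      assume "y \<in> D"
      \<comment> \<open>Points of \<open>D\<close> just below \<open>x\<close> carry the bound up to \<open>x\<close>; beyond \<open>x\<close> the growth of \<open>h\<close> pays for it.\<close>
      have bound: "(1 - e) * (z - s) \<le> f s - f y + h x" if "z \<in> D" "s < z" "z < x" for z
        using IH[of z] decr[of z y] h_mono[of z x] that \<open>x < y\<close> \<open>y \<in> D\<close> by (auto simp: Q_def)
      have "(1 - e) * (x - s) \<le> f s - f y + h x"
        by (rule le_of_full_measure_left[OF D_full, where u = s and \<phi> = "\<lambda>z. (1 - e) * (z - s)"])
          (use bound \<open>a < s\<close> \<open>s < x\<close> \<open>x < t\<close> \<open>t < b\<close> in \<open>auto intro: continuous_intros\<close>)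
      moreover have "(1 - e) * (y - x) \<le> y - x"
        using mult_left_mono[of x y e] \<open>0 \<le> e\<close> that(1) by (simp add: algebra_simps)
      moreover have "h x + (y - x) \<le> h y" using r that by blast
      moreover have "(1 - e) * (y - s) = (1 - e) * (x - s) + (1 - e) * (y - x)"
        by (simp add: algebra_simps)
      ultimately show "(1 - e) * (y - s) \<le> f s - f y + h y" by linarith
    qed
    then show ?thesis using \<open>r > 0\<close> by blast
  qed
  have "Q t" by (rule real_induction[OF less_imp_le[OF \<open>s < t\<close>] left_step right_step])
  then show ?thesis using \<open>t \<in> D\<close> by (simp add: Q_def)
qed

lemma decreasing_slope_approx:
  fixes D :: "real set" and f :: "real \<Rightarrow> real" and a b e s t :: real
  assumes D_sub: "D \<subseteq> {a<..<b}" and D_full: "{a<..<b} - D \<in> null_sets lebesgue"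
    and decr: "\<And>x y. x \<in> D \<Longrightarrow> y \<in> D \<Longrightarrow> x \<le> y \<Longrightarrow> f y \<le> f x"
    and slope: "\<And>x. x \<in> D \<Longrightarrow>
                  \<exists>\<eta>>0. \<forall>y\<in>D. x < y \<and> y < x + \<eta> \<longrightarrow> (1 - e) * (y - x) \<le> f x - f y"
    and "s \<in> D" "t \<in> D" "s < t" "0 < e"
  shows "(1 - e) * (t - s) - e \<le> f s - f t"
proof -
  obtain T where "open T" and T_null: "{a<..<b} - D \<subseteq> T"
    and T_small: "\<And>x y. measure lebesgue (T \<inter> {x..y}) < e"
    using null_set_open_superset_small[OF D_full \<open>0 < e\<close>] by blast
  \<comment> \<open>The compensator grows at unit rate on \<open>T\<close>, which covers the points where the slope bound is unavailable.\<close>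
  define h where "h x = measure lebesgue (T \<inter> {s..x})" for x
  have h_off: "\<exists>r>0. \<forall>y. x < y \<and> y < x + r \<longrightarrow> h x + (y - x) \<le> h y"
    if "x \<in> {a<..<b} - D" "s \<le> x" for x
  proof -
    have "x \<in> T" using T_null that(1) by blast
    then obtain r where "r > 0" "ball x r \<subseteq> T" using \<open>open T\<close> open_contains_ball by blast
    have "h y = h x + (y - x)" if "x < y" "y < x + r" for y
      unfolding h_def using \<open>open T\<close> \<open>s \<le> x\<close> \<open>ball x r \<subseteq> T\<close> that
      by (intro measure_Int_atLeastAtMost_extend) (auto simp: dist_real_def)
    then show ?thesis using \<open>r > 0\<close> by auto
  qed
  have "(1 - e) * (t - s) \<le> f s - f t + h t"
  proof (rule decreasing_slope_compensated[OF D_sub D_full decr slope _ _ h_off])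
    show "h x \<le> h y" if "x \<le> y" for x y
      unfolding h_def using \<open>open T\<close> that by (intro measure_Int_atLeastAtMost_mono) auto
    show "0 \<le> h s" by (simp add: h_def)
  qed (use assms(5-8) in auto)
  then show ?thesis using T_small[of s t] unfolding h_def by linarith
qed

lemma decreasing_slope_ge:
  fixes D :: "real set" and f :: "real \<Rightarrow> real" and a b s t :: real
  assumes D_sub: "D \<subseteq> {a<..<b}" and D_full: "{a<..<b} - D \<in> null_sets lebesgue"
    and decr: "\<And>x y. x \<in> D \<Longrightarrow> y \<in> D \<Longrightarrow> x \<le> y \<Longrightarrow> f y \<le> f x"
    and slope: "\<And>x e. x \<in> D \<Longrightarrow> 0 < e \<Longrightarrow>
                  \<exists>\<eta>>0. \<forall>y\<in>D. x < y \<and> y < x + \<eta> \<longrightarrow> (1 - e) * (y - x) \<le> f x - f y"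
    and "s \<in> D" "t \<in> D" "s < t"
  shows "t - s \<le> f s - f t"
proof (rule tendsto_le[of "at_right 0"])
  have "((\<lambda>e. (1 - e) * (t - s) - e) \<longlongrightarrow> (1 - 0) * (t - s) - 0) (at_right 0)"
    by (intro tendsto_intros)
  then show "((\<lambda>e. (1 - e) * (t - s) - e) \<longlongrightarrow> t - s) (at_right 0)" by simp
  show "\<forall>\<^sub>F e in at_right 0. (1 - e) * (t - s) - e \<le> f s - f t"
    using eventually_at_right_less
  proof (rule eventually_mono)
    fix e :: real assume "0 < e"
    then show "(1 - e) * (t - s) - e \<le> f s - f t"
      using decreasing_slope_approx[OF D_sub D_full decr slope] assms(5-7) by auto
  qed
qed auto

lemma riccati_imp_arctan_slope:
  fixes w :: "real \<Rightarrow> real" and D :: "real set" and x e :: real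
  assumes riccati: "Limsup (at x within (D \<inter> {x<..})) (\<lambda>t. ereal ((w t - w x) / (t - x)))
                      \<le> ereal (-1 - (w x)\<^sup>2)"
    and "e > 0"
  shows "\<exists>\<eta>>0. \<forall>y\<in>D. x < y \<and> y < x + \<eta> \<longrightarrow> (1 - e) * (y - x) \<le> arctan (w x) - arctan (w y)"
proof -
  define c where "c = 1 + (w x)\<^sup>2"
  \<comment> \<open>Chosen so that \<open>h \<mapsto> arctan (w x - a * h)\<close> has slope \<open>-(1 - e/2) < -(1 - e)\<close> at \<open>0\<close>.\<close>
  define a where "a = c * (1 - e/2)"
  have "c > 0" by (simp add: c_def add_pos_nonneg)
  then have "-1 - (w x)\<^sup>2 < -a"
    using mult_pos_pos[OF \<open>c > 0\<close> \<open>e > 0\<close>] by (simp add: a_def c_def algebra_simps)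
  then have "Limsup (at x within (D \<inter> {x<..})) (\<lambda>t. ereal ((w t - w x) / (t - x))) < ereal (-a)"
    using riccati by (simp add: le_less_trans)
  then have "\<forall>\<^sub>F y in at x within (D \<inter> {x<..}). (w y - w x) / (y - x) < -a"
    by (auto dest: Limsup_lessD)
  then obtain d1 where "d1 > 0"
    and chord: "\<And>y. y \<in> D \<Longrightarrow> x < y \<Longrightarrow> y < x + d1 \<Longrightarrow> w y < w x - a * (y - x)"
    unfolding eventually_at by (auto simp: dist_real_def pos_divide_less_eq algebra_simps)
  have "((\<lambda>h. arctan (w x - a * h)) has_field_derivative inverse (1 + (w x - a * 0)\<^sup>2) * - a) (at 0)"
    by (auto intro!: derivative_eq_intros)
  moreover have "inverse (1 + (w x - a * 0)\<^sup>2) * - a = -(1 - e/2)"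
    using \<open>c > 0\<close> by (simp add: a_def c_def field_simps)
  ultimately have "((\<lambda>h. (arctan (w x - a * h) - arctan (w x)) / h) \<longlongrightarrow> -(1 - e/2)) (at 0)"
    by (simp add: DERIV_def)
  then have "\<forall>\<^sub>F h in at 0. (arctan (w x - a * h) - arctan (w x)) / h < -(1 - e)"
    by (rule order_tendstoD) (use \<open>e > 0\<close> in simp)
  then obtain d2 where "d2 > 0"
    and quotient: "\<And>h. h \<noteq> 0 \<Longrightarrow> \<bar>h\<bar> < d2 \<Longrightarrow> (arctan (w x - a * h) - arctan (w x)) / h < -(1 - e)"
    unfolding eventually_at by (auto simp: dist_real_def)
  have curve: "arctan (w x - a * h) < arctan (w x) - (1 - e) * h" if "0 < h" "h < d2" for h
  proof -
    have "arctan (w x - a * h) - arctan (w x) < -(1 - e) * h"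
      using quotient[of h] that by (simp add: pos_divide_less_eq)
    then show ?thesis by linarith
  qed
  have "(1 - e) * (y - x) \<le> arctan (w x) - arctan (w y)"
    if "y \<in> D" "x < y" "y < x + min d1 d2" for y
  proof -
    have "arctan (w y) < arctan (w x - a * (y - x))" using chord that by (simp add: arctan_less_iff)
    moreover have "arctan (w x - a * (y - x)) < arctan (w x) - (1 - e) * (y - x)"
      using curve that by simp
    ultimately show ?thesis by linarith
  qed
  then show ?thesis using \<open>d1 > 0\<close> \<open>d2 > 0\<close> by (intro exI[of _ "min d1 d2"]) auto
qed

theorem mainTheorem12:
  fixes k0 L :: real and D :: "real set" and w :: "real \<Rightarrow> real"
  assumes k0: "k0 < 0"
    and L: "0 < L" "L \<le> pi"
    and D_sub: "D \<subseteq> {0<..<L}"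
    and D_full: "{0<..<L} - D \<in> null_sets lebesgue"
    and decr: "\<And>t1 t2. t1 \<in> D \<Longrightarrow> t2 \<in> D \<Longrightarrow> t1 < t2 \<Longrightarrow> w t1 > w t2"
    and riccati: "\<And>t0. t0 \<in> D \<Longrightarrow>
       Limsup (at t0 within (D \<inter> {t0<..})) (\<lambda>t. ereal ((w t - w t0) / (t - t0)))
         \<le> ereal (-1 - (w t0)\<^sup>2)"
    and near0: "\<exists>\<delta>>0. \<forall>t\<in>D. t < \<delta> \<longrightarrow>
       w t \<le> sqrt (-k0) * cosh (sqrt (-k0) * t) / sinh (sqrt (-k0) * t)"
  shows "\<forall>t\<in>D. w t \<le> cot t"
proof
  fix t assume "t \<in> D"
  then have "0 < t" "t < L" using D_sub by auto
  have arctan_decr: "arctan (w y) \<le> arctan (w x)" if "x \<in> D" "y \<in> D" "x \<le> y" for x y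
    using decr[of x y] that by (cases "x = y") (auto simp: arctan_le_iff)
  have "arctan (w t) \<le> pi/2 - t"
  proof (rule ccontr)
    assume "\<not> arctan (w t) \<le> pi/2 - t"
    then have "0 < min t (arctan (w t) - (pi/2 - t))" "min t (arctan (w t) - (pi/2 - t)) \<le> L"
      using \<open>0 < t\<close> \<open>t < L\<close> by auto
    then obtain s where s: "s \<in> D" "0 < s" "s < min t (arctan (w t) - (pi/2 - t))"
      using full_measure_dense[OF D_full order.refl] by blast
    have "t - s \<le> arctan (w s) - arctan (w t)"
      using decreasing_slope_ge[OF D_sub D_full arctan_decr riccati_imp_arctan_slope[OF riccati]]
        s \<open>t \<in> D\<close> by auto
    then show False using s arctan_ubound[of "w s"] by linarith
  qed
  then have "tan (arctan (w t)) \<le> tan (pi/2 - t)"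
    using arctan_lbound[of "w t"] \<open>0 < t\<close> \<open>t < L\<close> L by (intro tan_mono_le) auto
  then show "w t \<le> cot t" by (simp add: tan_cot' arctan)
qed

end
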